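(* In the Gödel setting described in the context, let $(A,B,R)$ be a $\top$-normalized fuzzy context and $(g,f)\in\mathcal{F}_N$. Then $g^{\uparrow_N}(a)\le g^{\uparrow_\pi}(a)$ for all $a\in A$.
   Context: Gödel setting: all truth-value sets are $[0,1]$ with the usual order, $x\&y=\min\{x,y\}$, and $z\swarrow y=z\nwarrow y$ equals $1$ if $y\le z$ and $z$ otherwise. A fuzzy context is $(A,B,R)$ with nonempty finite sets $A,B$ and $R\colon A\times B\to[0,1]$. For $g\colon B\to[0,1]$, $f\colon A\to[0,1]$: $g^{\uparrow_N}(a)=\inf_{b\in B}(g(b)\swarrow R(a,b))$, $f^{\downarrow^N}(b)=\inf_{a\in A}(f(a)\nwarrow R(a,b))$, $g^{\uparrow_\pi}(a)=\sup_{b\in B}\min\{R(a,b),g(b)\}$. $\mathcal{F}_N=\{(g,f)\mid g^{\uparrow_N}=f,\ f^{\downarrow^N}=g\}$. The context is normalized if no row $R(a,\cdot)$ and no column $R(\cdot,b)$ is identically $0$, and no row and no column has all values different from $0$; it is $\top$-normalized if moreover for every $a\in A$ there is $b_a\in B$ with $R(a,b_a)=1$. *)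

theory Defs
  imports Main "HOL.Real"
begin

text \<open>Goedel residuum: z swarrow y = z nwarrow y = 1 if y <= z, and z otherwise.\<close>
definition godel_res :: "real \<Rightarrow> real \<Rightarrow> real" where
  "godel_res z y = (if y \<le> z then 1 else z)"

definition fuzzy_context :: "'a set \<Rightarrow> 'b set \<Rightarrow> ('a \<Rightarrow> 'b \<Rightarrow> real) \<Rightarrow> bool" where
  "fuzzy_context A B R \<longleftrightarrow> finite A \<and> finite B \<and> A \<noteq> {} \<and> B \<noteq> {} \<and>
     (\<forall>a\<in>A. \<forall>b\<in>B. 0 \<le> R a b \<and> R a b \<le> 1)"

definition normalized :: "'a set \<Rightarrow> 'b set \<Rightarrow> ('a \<Rightarrow> 'b \<Rightarrow> real) \<Rightarrow> bool" where
  "normalized A B R \<longleftrightarrow>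
     (\<forall>a\<in>A. \<exists>b\<in>B. R a b \<noteq> 0) \<and> (\<forall>b\<in>B. \<exists>a\<in>A. R a b \<noteq> 0) \<and>
     (\<forall>a\<in>A. \<exists>b\<in>B. R a b = 0) \<and> (\<forall>b\<in>B. \<exists>a\<in>A. R a b = 0)"

definition top_normalized :: "'a set \<Rightarrow> 'b set \<Rightarrow> ('a \<Rightarrow> 'b \<Rightarrow> real) \<Rightarrow> bool" where
  "top_normalized A B R \<longleftrightarrow> normalized A B R \<and> (\<forall>a\<in>A. \<exists>b\<in>B. R a b = 1)"

definition upN :: "'b set \<Rightarrow> ('a \<Rightarrow> 'b \<Rightarrow> real) \<Rightarrow> ('b \<Rightarrow> real) \<Rightarrow> 'a \<Rightarrow> real" where
  "upN B R g a = Inf ((\<lambda>b. godel_res (g b) (R a b)) ` B)"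

definition downN :: "'a set \<Rightarrow> ('a \<Rightarrow> 'b \<Rightarrow> real) \<Rightarrow> ('a \<Rightarrow> real) \<Rightarrow> 'b \<Rightarrow> real" where
  "downN A R f b = Inf ((\<lambda>a. godel_res (f a) (R a b)) ` A)"

definition upPi :: "'b set \<Rightarrow> ('a \<Rightarrow> 'b \<Rightarrow> real) \<Rightarrow> ('b \<Rightarrow> real) \<Rightarrow> 'a \<Rightarrow> real" where
  "upPi B R g a = Sup ((\<lambda>b. min (R a b) (g b)) ` B)"

definition F_N :: "'a set \<Rightarrow> 'b set \<Rightarrow> ('a \<Rightarrow> 'b \<Rightarrow> real) \<Rightarrow> (('b \<Rightarrow> real) \<times> ('a \<Rightarrow> real)) set" where
  "F_N A B R = {(g, f). (\<forall>b\<in>B. 0 \<le> g b \<and> g b \<le> 1) \<and> (\<forall>a\<in>A. 0 \<le> f a \<and> f a \<le> 1) \<and>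
      (\<forall>a\<in>A. upN B R g a = f a) \<and> (\<forall>b\<in>B. downN A R f b = g b)}"

end

theory Submission
  imports Defs
begin

(* Pick b with R a b = 1. The b-th term of the infimum defining the necessity
   operator is g b residuated by 1, i.e. g b, and the b-th term of the supremum
   defining the possibility operator is min 1 (g b) = g b; so both sides are
   separated by g b. *)

lemma upN_le_at_top_entry:
  assumes "finite B" "b \<in> B" "R a b = 1" "g b \<le> 1"
  shows "upN B R g a \<le> g b"
proof -
  have "upN B R g a \<le> godel_res (g b) (R a b)"
    unfolding upN_def using assms(1,2) by (intro cInf_lower imageI bdd_below_finite finite_imageI)
  also have "\<dots> = g b"
    using assms(3,4) by (auto simp: godel_res_def)
  finally show ?thesis .
qed

lemma upPi_ge_at_top_entry:
  assumes "finite B" "b \<in> B" "R a b = 1" "g b \<le> 1"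
  shows "g b \<le> upPi B R g a"
proof -
  have "g b = min (R a b) (g b)"
    using assms(3,4) by simp
  also have "\<dots> \<le> upPi B R g a"
    unfolding upPi_def using assms(1,2) by (intro cSup_upper imageI bdd_above_finite finite_imageI)
  finally show ?thesis .
qed

theorem mainTheorem12:
  fixes A :: "'a set" and B :: "'b set" and R :: "'a \<Rightarrow> 'b \<Rightarrow> real"
    and g :: "'b \<Rightarrow> real" and f :: "'a \<Rightarrow> real"
  assumes "fuzzy_context A B R"
    and "top_normalized A B R"
    and "(g, f) \<in> F_N A B R"
  shows "\<forall>a\<in>A. upN B R g a \<le> upPi B R g a"
proof
  fix a assume "a \<in> A"
  then obtain b where b: "b \<in> B" "R a b = 1"
    using assms(2) by (auto simp: top_normalized_def)
  have "finite B"
    using assms(1) by (simp add: fuzzy_context_def)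
  moreover have "g b \<le> 1"
    using assms(3) b(1) by (auto simp: F_N_def)
  ultimately show "upN B R g a \<le> upPi B R g a"
    using b upN_le_at_top_entry upPi_ge_at_top_entry by (meson order_trans)
qed

end
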